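(* Let $f(x)$ be a formal power series with zero constant term and positive coefficient of $x$. If the power series $x/f(x)=\sum_{n\ge0}c_nx^n$ is alternating, i.e. $(-1)^nc_n\ge0$ for all $n\ge0$, then the compositional inverse $f^{-1}(x)=\sum_{n\ge1}e_nx^n$ satisfies $(-1)^{n-1}e_n\ge0$ for all $n\ge1$.
   Context: The compositional inverse $f^{-1}(x)$ is the unique power series with zero constant term satisfying $f(f^{-1}(x))=f^{-1}(f(x))=x$. *)

theory Defs
  imports "HOL-Computational_Algebra.Formal_Power_Series"
begin

end

theory Submission
  imports Defs
begin

text \<open>
  Put \<open>g = x/f(x)\<close> and \<open>e = f\<^sup>-\<^sup>1\<close>. Composing \<open>g f = x\<close> with \<open>e\<close> gives
  \<open>e = x\<cdot>g(e)\<close>, i.e. \<open>b = -x\<cdot>g(-b)\<close> for \<open>b = -e\<close>. Alternating sign patterns up to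
  degree \<open>m\<close> are preserved by products and powers, and \<open>g(-b)\<close> is a sum of terms
  \<open>((-1)\<^sup>k g\<^sub>k) b\<^sup>k\<close> in which both factors alternate. Since the coefficient of
  \<open>x\<^sup>n\<^sup>+\<^sup>1\<close> in \<open>b\<close> only involves coefficients of \<open>b\<close> up to degree \<open>n\<close>, induction on
  the degree shows that \<open>b\<close> alternates, which is the claim.
\<close>

unbundle fps_syntax

definition alternating_upto :: "nat \<Rightarrow> 'a::linordered_idom fps \<Rightarrow> bool" where
  "alternating_upto m a \<longleftrightarrow> (\<forall>j\<le>m. (-1) ^ j * a $ j \<ge> 0)"

lemma alternating_upto_mult:
  assumes "alternating_upto m a" "alternating_upto m b"
  shows "alternating_upto m (a * b)"
  unfolding alternating_upto_def
proof (intro allI impI)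
  fix n assume "n \<le> m"
  have "(-1) ^ n * (a * b) $ n = (\<Sum>i=0..n. ((-1) ^ i * a $ i) * ((-1) ^ (n - i) * b $ (n - i)))"
    unfolding fps_mult_nth sum_distrib_left
  proof (rule sum.cong[OF refl])
    fix i assume "i \<in> {0..n}"
    then have "(-1) ^ n = (-1) ^ i * ((-1) ^ (n - i) :: 'a)"
      by (simp flip: power_add)
    then show "(-1) ^ n * (a $ i * b $ (n - i)) = (-1) ^ i * a $ i * ((-1) ^ (n - i) * b $ (n - i))"
      by (simp add: ac_simps)
  qed
  also have "\<dots> \<ge> 0"
    by (rule sum_nonneg, rule mult_nonneg_nonneg)
      (use assms \<open>n \<le> m\<close> in \<open>auto simp: alternating_upto_def\<close>)
  finally show "(-1) ^ n * (a * b) $ n \<ge> 0" .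
qed

lemma alternating_upto_power:
  assumes "alternating_upto m a"
  shows "alternating_upto m (a ^ k)"
proof (induction k)
  case 0
  show ?case by (simp add: alternating_upto_def)
next
  case (Suc k)
  then show ?case using assms by (simp add: alternating_upto_mult)
qed

lemma fps_nth_power_uminus:
  "((- b) ^ k) $ n = (-1) ^ k * (b ^ k) $ (n :: nat)" for b :: "'a::comm_ring_1 fps"
proof -
  have "(- b) ^ k = fps_const ((-1) ^ k) * b ^ k"
    by (induction k)
      (simp_all add: fps_const_neg[symmetric] fps_const_mult[symmetric] del: fps_const_neg fps_const_mult)
  then show ?thesis by simp
qed

lemma alternating_upto_compose_uminus:
  assumes "alternating_upto m g" "alternating_upto m b"
  shows "alternating_upto m (g oo - b)"
  unfolding alternating_upto_def
proof (intro allI impI)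
  fix n assume "n \<le> m"
  have "(-1) ^ n * (g oo - b) $ n = (\<Sum>k=0..n. ((-1) ^ k * g $ k) * ((-1) ^ n * (b ^ k) $ n))"
    unfolding fps_compose_nth sum_distrib_left fps_nth_power_uminus by (simp add: ac_simps)
  also have "\<dots> \<ge> 0"
    by (rule sum_nonneg, rule mult_nonneg_nonneg)
      (use assms alternating_upto_power[OF assms(2)] \<open>n \<le> m\<close> in \<open>auto simp: alternating_upto_def\<close>)
  finally show "(-1) ^ n * (g oo - b) $ n \<ge> 0" .
qed

lemma alternating_of_fixpoint:
  fixes g b :: "'a::linordered_idom fps"
  assumes g: "\<forall>n. (-1) ^ n * g $ n \<ge> 0"
    and b: "b = - fps_X * (g oo - b)"
  shows "alternating_upto n b"
proof (induction n)
  case 0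
  have "b $ 0 = 0" by (subst b) simp
  then show ?case by (simp add: alternating_upto_def)
next
  case (Suc n)
  have "alternating_upto n (g oo - b)"
    using g Suc by (intro alternating_upto_compose_uminus) (auto simp: alternating_upto_def)
  moreover have "(-1) ^ Suc n * b $ Suc n = (-1) ^ n * (g oo - b) $ n"
    by (subst b) simp
  ultimately have "(-1) ^ Suc n * b $ Suc n \<ge> 0"
    by (simp add: alternating_upto_def)
  with Suc show ?case
    by (auto simp: alternating_upto_def le_Suc_eq)
qed

lemma fps_inv_eq_X_mult_compose:
  fixes f :: "'a::field fps"
  assumes "f $ 0 = 0" "f $ 1 \<noteq> 0"
  shows "fps_inv f = fps_X * ((fps_X / f) oo fps_inv f)"
proof -
  let ?e = "fps_inv f"
  have "subdegree f = 1"
    using assms by (intro subdegreeI) auto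
  then have "(fps_X / f) * f = fps_X"
    using assms by (intro fps_times_divide_eq) auto
  moreover have "?e $ 0 = 0" by (simp add: fps_inv_def)
  moreover have "f oo ?e = fps_X" using assms by (rule fps_inv_right)
  ultimately show ?thesis
    by (metis fps_X_fps_compose_startby0 fps_compose_mult_distrib mult.commute)
qed

theorem claim6p1:
  fixes f :: "real fps"
  assumes "fps_nth f 0 = 0"
    and "fps_nth f 1 > 0"
    and "\<forall>n. (-1) ^ n * fps_nth (fps_X / f) n \<ge> 0"
  shows "\<forall>n\<ge>1. (-1) ^ (n - 1) * fps_nth (fps_inv f) n \<ge> 0"
proof (intro allI impI)
  fix n :: nat assume "n \<ge> 1"
  have "- fps_inv f = - fps_X * ((fps_X / f) oo - (- fps_inv f))"
    using fps_inv_eq_X_mult_compose[of f] assms(1,2) by simp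
  then have "alternating_upto n (- fps_inv f)"
    using assms(3) by (rule alternating_of_fixpoint[rotated])
  then have "(-1) ^ n * - fps_inv f $ n \<ge> 0"
    by (simp add: alternating_upto_def)
  moreover have "(-1) ^ n = - ((-1) ^ (n - 1) :: real)"
    using \<open>n \<ge> 1\<close> by (cases n) auto
  ultimately show "(-1) ^ (n - 1) * fps_inv f $ n \<ge> 0"
    by simp
qed

end
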